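(* Let $\mathcal{C}$ be a permutation class (resp. polyomino class) and let $\mathcal{M}$ be an $m$-basis of $\mathcal{C}$. Then the $p$-basis of $\mathcal{C}$ consists of all permutations (resp. polyominoes) that contain a submatrix belonging to $\mathcal{M}$ and that are minimal (with respect to the pattern order on permutations, resp. on polyominoes) for this property.
   Context: Binary matrices have entries in $\{0,1\}$; $M'\preccurlyeq M$ (submatrix order) means $M'$ is obtained from $M$ by deleting some rows and/or columns. A permutation $\sigma$ of $\{1,\dots,n\}$ is identified with its permutation matrix ($M_\sigma(i,j)=1$ iff $i=\sigma(j)$); the pattern order on permutations is the submatrix order restricted to permutation matrices, and a permutation class is a downward closed set for it. A polyomino is a finite edge-connected union of unit cells of $\mathbb{Z}^2$ up to translation, identified with the binary matrix of its minimal bounding rectangle ($1$ for cells, $0$ otherwise); the pattern order on polyominoes is the submatrix order restricted to polyominoes, and a polyomino class is a downward closed set for it. $Av(\mathcal{M})$ is the set of permutations (resp. polyominoes) with no submatrix in $\mathcal{M}$. The $p$-basis of $\mathcal{C}$ is the set of minimal permutations (resp. polyominoes), for the pattern order, not belonging to $\mathcal{C}$. An $m$-basis of $\mathcal{C}$ is an antichain $\mathcal{M}$ of binary matrices for $\preccurlyeq$ with $\mathcal{C}=Av(\mathcal{M})$. *)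

theory Defs
  imports "HOL-Combinatorics.Permutations"
begin

text \<open>A binary matrix: (number of rows m, number of columns n, set of positions of 1-entries),
  positions 0-indexed, (i,j) = (row, column).\<close>
type_synonym bmat = "nat \<times> nat \<times> (nat \<times> nat) set"

definition wf_bmat :: "bmat \<Rightarrow> bool" where
  "wf_bmat M \<longleftrightarrow> (case M of (m, n, E) \<Rightarrow> E \<subseteq> {..<m} \<times> {..<n})"

definition submatrix :: "bmat \<Rightarrow> bmat \<Rightarrow> bool" (infix "\<preceq>\<^sub>m" 50) where
  "M' \<preceq>\<^sub>m M \<longleftrightarrow> (case M' of (m', n', E') \<Rightarrow> case M of (m, n, E) \<Rightarrow>
     wf_bmat M' \<and> wf_bmat M \<and>
     (\<exists>r c. strict_mono_on {..<m'} r \<and> r ` {..<m'} \<subseteq> {..<m} \<and>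
            strict_mono_on {..<n'} c \<and> c ` {..<n'} \<subseteq> {..<n} \<and>
            (\<forall>i<m'. \<forall>j<n'. ((i, j) \<in> E' \<longleftrightarrow> (r i, c j) \<in> E))))"

definition perm_mat :: "nat \<Rightarrow> (nat \<Rightarrow> nat) \<Rightarrow> bmat" where
  "perm_mat n \<sigma> = (n, n, {(\<sigma> j, j) | j. j < n})"

definition perms :: "bmat set" where
  "perms = {perm_mat n \<sigma> | n \<sigma>. \<sigma> permutes {..<n}}"

definition cell_adj :: "nat \<times> nat \<Rightarrow> nat \<times> nat \<Rightarrow> bool" where
  "cell_adj a b \<longleftrightarrow> (case a of (i, j) \<Rightarrow> case b of (i', j') \<Rightarrow>
      (i = i' \<and> (j' = Suc j \<or> j = Suc j')) \<or> (j = j' \<and> (i' = Suc i \<or> i = Suc i')))"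

text \<open>Polyominoes, identified with the binary matrix of their minimal bounding rectangle:
  nonempty finite edge-connected set of cells, and every row and column of the bounding
  rectangle contains a cell (minimality).\<close>
definition polys :: "bmat set" where
  "polys = {(m, n, E) | m n E. wf_bmat (m, n, E) \<and> E \<noteq> {} \<and>
      (\<forall>i<m. \<exists>j. (i, j) \<in> E) \<and> (\<forall>j<n. \<exists>i. (i, j) \<in> E) \<and>
      (\<forall>a\<in>E. \<forall>b\<in>E. (\<lambda>x y. x \<in> E \<and> y \<in> E \<and> cell_adj x y)\<^sup>*\<^sup>* a b)}"

text \<open>Generic notions relative to a universe U (permutations or polyominoes), whose
  pattern order is the submatrix order restricted to U.\<close>
definition is_class :: "bmat set \<Rightarrow> bmat set \<Rightarrow> bool" where
  "is_class U C \<longleftrightarrow> C \<subseteq> U \<and> (\<forall>x\<in>C. \<forall>y\<in>U. y \<preceq>\<^sub>m x \<longrightarrow> y \<in> C)"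

definition Av :: "bmat set \<Rightarrow> bmat set \<Rightarrow> bmat set" where
  "Av U Ms = {x \<in> U. \<not> (\<exists>M\<in>Ms. M \<preceq>\<^sub>m x)}"

definition p_basis :: "bmat set \<Rightarrow> bmat set \<Rightarrow> bmat set" where
  "p_basis U C = {x \<in> U. x \<notin> C \<and> (\<forall>y\<in>U. y \<preceq>\<^sub>m x \<and> y \<noteq> x \<longrightarrow> y \<in> C)}"

definition m_basis :: "bmat set \<Rightarrow> bmat set \<Rightarrow> bmat set \<Rightarrow> bool" where
  "m_basis U C Ms \<longleftrightarrow> (\<forall>M\<in>Ms. wf_bmat M) \<and>
     (\<forall>A\<in>Ms. \<forall>B\<in>Ms. A \<preceq>\<^sub>m B \<longrightarrow> A = B) \<and> C = Av U Ms"

end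

theory Submission
  imports Defs
begin

lemma p_basis_Av:
  "p_basis U (Av U Ms) =
    {x \<in> U. (\<exists>M\<in>Ms. M \<preceq>\<^sub>m x) \<and>
            (\<forall>y\<in>U. y \<preceq>\<^sub>m x \<and> y \<noteq> x \<longrightarrow> \<not> (\<exists>M\<in>Ms. M \<preceq>\<^sub>m y))}"
  unfolding p_basis_def Av_def by blast

theorem proposition8:
  fixes U C Ms :: "bmat set"
  assumes "U = perms \<or> U = polys"
    and "is_class U C"
    and "m_basis U C Ms"
  shows "p_basis U C =
    {x \<in> U. (\<exists>M\<in>Ms. M \<preceq>\<^sub>m x) \<and>
            (\<forall>y\<in>U. y \<preceq>\<^sub>m x \<and> y \<noteq> x \<longrightarrow> \<not> (\<exists>M\<in>Ms. M \<preceq>\<^sub>m y))}"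
proof -
  have "C = Av U Ms" using \<open>m_basis U C Ms\<close> by (simp add: m_basis_def)
  then show ?thesis by (simp add: p_basis_Av)
qed

end
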